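(* In the setting described in the context, the elements $\exp(t_1),\dots,\exp(t_n)$ together with the elements $t^*(g\otimes g')=\exp\bigl(t(g\otimes g')\bigr)$, where $(g,g')$ ranges over pairs of elements of $\mathcal G(\overline{\mathbb{Q}\{\boldsymbol{X}\}})\setminus\{1\}$, freely generate a (free) abelian subgroup of the multiplicative group $\mathcal G(\overline{\mathbb{Q}[T]})$; that is, if $e_1,\dots,e_n,d_1,\dots,d_m\in\mathbb{Z}$ and $(g_1,g_1'),\dots,(g_m,g_m')$ are pairwise distinct pairs in $\mathcal G(\overline{\mathbb{Q}\{\boldsymbol{X}\}})\setminus\{1\}$ with $\exp(t_1)^{e_1}\cdots\exp(t_n)^{e_n}t^*(g_1\otimes g_1')^{d_1}\cdots t^*(g_m\otimes g_m')^{d_m}=1$, then all $e_i$ and $d_j$ are zero.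
   Context: Let $\boldsymbol{X}=\{X_1,\dots,X_n\}$ and let $\mathbb{Q}\{\boldsymbol{X}\}$ be the free non-associative algebra over $\mathbb{Q}$ on $\boldsymbol{X}$, made into a (non-associative) Hopf algebra by declaring each $X_i$ primitive ($\Delta X_i=X_i\otimes1+1\otimes X_i$, $\Delta$ multiplicative, counit $\epsilon$). Let $\overline{\mathbb{Q}\{\boldsymbol{X}\}}$ be its completion with respect to degree (non-associative formal power series), with the coproduct extended to the completed tensor product. $\mathcal G(H)$ denotes the set of group-like elements, i.e. $g$ with $\Delta(g)=g\otimes g$ and $\epsilon(g)=1$. Let $m(\boldsymbol{X})$ be the set of non-associative monomials in $\boldsymbol{X}$ of degree $\ge1$, and $T$ the set of formal symbols $\{t_1,\dots,t_n\}\sqcup\{t(m_1,m_2)\mid m_1,m_2\in m(\boldsymbol{X})\}$, graded by $|t_i|=1$, $|t(m_1,m_2)|=|m_1|+|m_2|$. $\mathbb{Q}[T]$ is the commutative associative polynomial algebra on $T$, a Hopf algebra with all elements of $T$ primitive, and $\overline{\mathbb{Q}[T]}$ its completion with respect to degree. Let $t$ be the linear map from $\mathbb{Q}\{\boldsymbol{X}\}\otimes\mathbb{Q}\{\boldsymbol{X}\}$ to the span of $T$ given by $t(m_1\otimes m_2)=t(m_1,m_2)$ for $m_1,m_2\in m(\boldsymbol{X})$ and $t(m_1\otimes1)=t(1\otimes m_2)=t(1\otimes1)=0$, extended to the degree completions. For $g,g'$ group-like, $t^*(g\otimes g')$ denotes $\exp(t(g\otimes g'))\in\overline{\mathbb{Q}[T]}$,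 where $\exp$ is the usual exponential series. *)

theory Defs
  imports Complex_Main "HOL-Library.Multiset"
begin

text \<open>Non-associative monomials of degree at least 1 (binary trees with leaves Var i).
  The basis of Q{X} is {1} union m(X); we encode it as nmon option, None being 1.\<close>

datatype nmon = Var nat | Mul nmon nmon

fun nvalid :: "nat \<Rightarrow> nmon \<Rightarrow> bool" where
  "nvalid n (Var i) = (i < n)"
| "nvalid n (Mul a b) = (nvalid n a \<and> nvalid n b)"

fun omul :: "nmon option \<Rightarrow> nmon option \<Rightarrow> nmon option" where
  "omul None b = b"
| "omul a None = a"
| "omul (Some a) (Some b) = Some (Mul a b)"

text \<open>Coproduct of a monomial, as a list of simple tensors (with multiplicity):
  generators primitive, coproduct multiplicative.\<close>
fun cop :: "nmon \<Rightarrow> (nmon option \<times> nmon option) list" where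
  "cop (Var i) = [(Some (Var i), None), (None, Some (Var i))]"
| "cop (Mul a b) = [(omul u u', omul v v'). (u, v) \<leftarrow> cop a, (u', v') \<leftarrow> cop b]"

definition ocop :: "nmon option \<Rightarrow> (nmon option \<times> nmon option) list" where
  "ocop w = (case w of None \<Rightarrow> [(None, None)] | Some m \<Rightarrow> cop m)"

text \<open>Elements of the degree completion: arbitrary coefficient functions on the basis.\<close>
type_synonym nser = "nmon option \<Rightarrow> rat"

text \<open>Coproduct into the completed tensor product (coefficient of p \<otimes> q).\<close>
definition ncoprod :: "nser \<Rightarrow> (nmon option \<times> nmon option \<Rightarrow> rat)" where
  "ncoprod f = (\<lambda>(p, q). \<Sum>w \<in> {w. (p, q) \<in> set (ocop w)}.
       f w * of_nat (count_list (ocop w) (p, q)))"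

definition nsone :: nser where
  "nsone = (\<lambda>w. if w = None then 1 else 0)"

definition ngrouplike :: "nat \<Rightarrow> nser \<Rightarrow> bool" where
  "ngrouplike n g \<longleftrightarrow>
     (\<forall>m. g (Some m) \<noteq> 0 \<longrightarrow> nvalid n m) \<and>
     g None = 1 \<and>
     ncoprod g = (\<lambda>(p, q). g p * g q)"

section \<open>The completed commutative polynomial algebra on T\<close>

datatype tsym = TI nat | TP nmon nmon

type_synonym tser = "tsym multiset \<Rightarrow> rat"

definition tmul :: "tser \<Rightarrow> tser \<Rightarrow> tser" where
  "tmul F G = (\<lambda>M. \<Sum>A \<in> {A. A \<subseteq># M}. F A * G (M - A))"

definition tone :: tser where
  "tone = (\<lambda>M. if M = {#} then 1 else 0)"

definition tpow :: "tser \<Rightarrow> nat \<Rightarrow> tser" where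
  "tpow F k = (tmul F ^^ k) tone"

text \<open>Exponential series, for arguments without constant term (only finitely many
  powers contribute to each coefficient).\<close>
definition texp :: "tser \<Rightarrow> tser" where
  "texp u = (\<lambda>M. \<Sum>k \<le> size M. tpow u k M / of_nat (fact k))"

definition tinv :: "tser \<Rightarrow> tser" where
  "tinv F = (THE G. tmul F G = tone)"

definition tipow :: "tser \<Rightarrow> int \<Rightarrow> tser" where
  "tipow F z = (if 0 \<le> z then tpow F (nat z) else tpow (tinv F) (nat (- z)))"

definition tlist_prod :: "tser list \<Rightarrow> tser" where
  "tlist_prod Fs = foldr tmul Fs tone"

text \<open>The element t_(i+1) (0-indexed as TI i).\<close>
definition tgen :: "tsym \<Rightarrow> tser" where
  "tgen s = (\<lambda>M. if M = {#s#} then 1 else 0)"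

definition tt :: "nser \<Rightarrow> nser \<Rightarrow> tser" where
  "tt g g' = (\<lambda>M. \<Sum>(a, b) \<in> {(a, b). M = {#TP a b#}}. g (Some a) * g' (Some b))"

definition tstar :: "nser \<Rightarrow> nser \<Rightarrow> tser" where
  "tstar g g' = texp (tt g g')"

end

theory Submission
  imports Defs
begin

text \<open>Only coefficients of degree at most one matter. All factors have constant term 1, and on
  such series the coefficient of a single variable is additive under products, inverses and
  powers, while \<open>exp u\<close> and \<open>u\<close> agree there. The relation therefore yields a linear relation
  among the \<open>t\<^sub>i\<close> and the elements \<open>t(g \<otimes> g')\<close>: the former forces \<open>e = 0\<close>; the coefficients of
  the \<open>t(m\<^sub>1, m\<^sub>2)\<close> say that \<open>\<Sum>\<^sub>j d\<^sub>j (g\<^sub>j - 1) \<otimes> (g'\<^sub>j - 1)\<close> vanishes on all pairs of basis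
  elements. Group-like series are characters of the dual algebra, so expanding the tensors gives
  a vanishing combination of the characters \<open>g \<otimes> g'\<close>, \<open>g \<otimes> 1\<close>, \<open>1 \<otimes> g'\<close>, \<open>1 \<otimes> 1\<close> of its tensor
  square. Since the pairs are distinct and no \<open>g\<^sub>j, g'\<^sub>j\<close> equals 1, each \<open>g\<^sub>j \<otimes> g'\<^sub>j\<close> occurs
  exactly once, and Dedekind's independence of characters gives \<open>d\<^sub>j = 0\<close>.\<close>

lemma finite_submultisets: "finite {A. A \<subseteq># M}"
proof (rule finite_subset)
  show "{A. A \<subseteq># M} \<subseteq> (\<Union>k\<le>size M. multisets_of_size (set_mset M) k)"
    by (auto simp: multisets_of_size_def dest: mset_subset_eqD size_mset_mono)
qed auto

lemma tmul_eq_nonempty_sum: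
  "tmul F G M = F {#} * G M + (\<Sum>A | A \<subseteq># M \<and> A \<noteq> {#}. F A * G (M - A))"
proof -
  have "{A. A \<subseteq># M} = insert {#} {A. A \<subseteq># M \<and> A \<noteq> {#}}" by auto
  moreover have "finite {A. A \<subseteq># M \<and> A \<noteq> {#}}"
    by (rule finite_subset[OF _ finite_submultisets[of M]]) auto
  ultimately show ?thesis unfolding tmul_def by simp
qed

lemma tmul_empty: "tmul F G {#} = F {#} * G {#}"
  by (simp add: tmul_eq_nonempty_sum)

lemma tmul_single: "tmul F G {#s#} = F {#} * G {#s#} + F {#s#} * G {#}"
proof -
  have "{A. A \<subseteq># {#s#}} = {{#}, {#s#}}"
    using nonempty_subseteq_mset_eq_single by auto
  then show ?thesis unfolding tmul_def by simp
qed

lemma tone_empty: "tone {#} = 1" and tone_single: "tone {#s#} = 0"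
  unfolding tone_def by auto

text \<open>Solving \<open>F \<cdot> G = 1\<close> coefficientwise by recursion on the degree; this shows that
  the description in \<open>tinv\<close> is not a junk value.\<close>

function tinv_series :: "tser \<Rightarrow> tser" where
  "tinv_series F M =
     (if M = {#} then 1 else - (\<Sum>A | A \<subseteq># M \<and> A \<noteq> {#}. F A * tinv_series F (M - A)))"
  by auto
termination
  by (relation "measure (size \<circ> snd)")
     (auto simp: nonempty_has_size size_Diff_submset)

declare tinv_series.simps[simp del]

lemma tmul_tinv_series:
  assumes "F {#} = 1"
  shows "tmul F (tinv_series F) = tone"
proof
  fix M
  show "tmul F (tinv_series F) M = tone M"
  proof (cases "M = {#}")
    case True
    then show ?thesis using assms by (simp add: tmul_empty tone_empty tinv_series.simps)
  next
    case False
    then show ?thesis using assms unfolding tmul_eq_nonempty_sum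
      by (subst tinv_series.simps) (simp add: tone_def)
  qed
qed

lemma tmul_left_cancel:
  assumes "F {#} = 1" and "tmul F G = tmul F G'"
  shows "G = G'"
proof
  fix M
  show "G M = G' M"
  proof (induction M rule: measure_induct_rule[where f = size])
    case (less M)
    have "G (M - A) = G' (M - A)" if "A \<subseteq># M" "A \<noteq> {#}" for A
      using less that size_mset_mono[of A M] nonempty_has_size[of A]
      by (auto simp: size_Diff_submset)
    then have "(\<Sum>A | A \<subseteq># M \<and> A \<noteq> {#}. F A * G (M - A))
             = (\<Sum>A | A \<subseteq># M \<and> A \<noteq> {#}. F A * G' (M - A))"
      by (intro sum.cong) auto
    moreover have "tmul F G M = tmul F G' M" using assms by simp
    ultimately show ?case using assms unfolding tmul_eq_nonempty_sum by simp
  qed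
qed

lemma tmul_tinv: "F {#} = 1 \<Longrightarrow> tmul F (tinv F) = tone"
  unfolding tinv_def
  by (rule theI[of _ "tinv_series F"]) (use tmul_tinv_series tmul_left_cancel in metis)+

lemma tinv_empty_single:
  assumes "F {#} = 1"
  shows "tinv F {#} = 1" "tinv F {#s#} = - F {#s#}"
proof -
  have "tmul F (tinv F) {#} = 1" "tmul F (tinv F) {#s#} = 0"
    using tmul_tinv[of F, OF assms] by (auto simp: tone_empty tone_single)
  then show "tinv F {#} = 1" "tinv F {#s#} = - F {#s#}"
    using assms by (auto simp: tmul_empty tmul_single)
qed

lemma tpow_empty_single:
  assumes "F {#} = 1"
  shows "tpow F k {#} = 1 \<and> tpow F k {#s#} = of_nat k * F {#s#}"
  using assms
  by (induction k) (auto simp: tpow_def tone_empty tone_single tmul_empty tmul_single algebra_simps)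

lemma tipow_empty_single:
  assumes "F {#} = 1"
  shows "tipow F z {#} = 1" "tipow F z {#s#} = of_int z * F {#s#}"
  using tpow_empty_single[of F, OF assms] tinv_empty_single[of F, OF assms]
    tpow_empty_single[of "tinv F", OF tinv_empty_single(1)[of F, OF assms]]
  by (auto simp: tipow_def)

lemma tlist_prod_single:
  assumes "\<forall>F\<in>set Fs. F {#} = 1"
  shows "tlist_prod Fs {#s#} = (\<Sum>F\<leftarrow>Fs. F {#s#})"
proof -
  have "tlist_prod Fs {#} = 1 \<and> tlist_prod Fs {#s#} = (\<Sum>F\<leftarrow>Fs. F {#s#})"
    using assms
    by (induction Fs) (auto simp: tlist_prod_def tone_empty tone_single tmul_empty tmul_single)
  then show ?thesis ..
qed

lemma texp_empty: "texp u {#} = 1" and texp_single: "texp u {#s#} = u {#s#}"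
  by (auto simp: texp_def tpow_def tone_empty tone_single tmul_single)

lemma tgen_single: "tgen t {#s#} = (if s = t then 1 else 0)"
  unfolding tgen_def by auto

lemma tt_TI: "tt g g' {#TI i#} = 0"
  unfolding tt_def by simp

lemma tt_TP: "tt g g' {#TP a b#} = g (Some a) * g' (Some b)"
proof -
  have "{(x, y). {#TP a b#} = {#TP x y#}} = {(a, b)}" by auto
  then show ?thesis unfolding tt_def by simp
qed

text \<open>Multiplicative functionals, taking the value 1 at \<open>u\<close>, on the algebra with basis \<open>'x\<close> and
  product \<open>p \<cdot> q = \<Sum>w \<in> W p q. c p q w \<cdot> w\<close>.\<close>

definition character ::
    "('x \<Rightarrow> 'x \<Rightarrow> 'x set) \<Rightarrow> ('x \<Rightarrow> 'x \<Rightarrow> 'x \<Rightarrow> 'a::field) \<Rightarrow> 'x \<Rightarrow> ('x \<Rightarrow> 'a) \<Rightarrow> bool" where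
  "character W c u \<chi> \<longleftrightarrow> \<chi> u = 1 \<and> (\<forall>p q. \<chi> p * \<chi> q = (\<Sum>w\<in>W p q. c p q w * \<chi> w))"

lemma character_relation_twist:
  assumes "\<forall>\<chi>\<in>S. character W c u \<chi>" and "\<And>p. (\<Sum>\<chi>\<in>S. a \<chi> * \<chi> p) = 0"
  shows "(\<Sum>\<chi>\<in>S. a \<chi> * \<chi> y * \<chi> p) = 0"
proof -
  have "(\<Sum>\<chi>\<in>S. a \<chi> * \<chi> y * \<chi> p) = (\<Sum>\<chi>\<in>S. a \<chi> * (\<Sum>w\<in>W y p. c y p w * \<chi> w))"
    using assms(1) by (intro sum.cong) (auto simp: character_def mult.assoc)
  also have "\<dots> = (\<Sum>w\<in>W y p. c y p w * (\<Sum>\<chi>\<in>S. a \<chi> * \<chi> w))"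
    by (simp add: sum_distrib_left mult_ac sum.swap[of _ S])
  also have "\<dots> = 0" using assms(2) by simp
  finally show ?thesis .
qed

theorem characters_linearly_independent:
  assumes "finite S" and "\<forall>\<chi>\<in>S. character W c u \<chi>" and "\<And>p. (\<Sum>\<chi>\<in>S. a \<chi> * \<chi> p) = 0"
  shows "\<forall>\<chi>\<in>S. a \<chi> = 0"
  using assms
proof (induction S arbitrary: a rule: finite_induct)
  case empty
  then show ?case by simp
next
  case (insert \<chi>\<^sub>0 S)
  have "(\<Sum>\<chi>\<in>S. a \<chi> * (\<chi> y - \<chi>\<^sub>0 y) * \<chi> p) = 0" for y p
  proof -
    have "(\<Sum>\<chi>\<in>insert \<chi>\<^sub>0 S. a \<chi> * (\<chi> y - \<chi>\<^sub>0 y) * \<chi> p)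
        = (\<Sum>\<chi>\<in>insert \<chi>\<^sub>0 S. a \<chi> * \<chi> y * \<chi> p) - \<chi>\<^sub>0 y * (\<Sum>\<chi>\<in>insert \<chi>\<^sub>0 S. a \<chi> * \<chi> p)"
      by (simp add: algebra_simps sum_subtractf sum_distrib_left)
    also have "\<dots> = 0"
      using character_relation_twist[OF insert.prems] insert.prems(2) by simp
    finally show ?thesis using insert.hyps by simp
  qed
  then have "\<forall>\<chi>\<in>S. a \<chi> * (\<chi> y - \<chi>\<^sub>0 y) = 0" for y
    using insert.IH[of "\<lambda>\<chi>. a \<chi> * (\<chi> y - \<chi>\<^sub>0 y)"] insert.prems(1) by simp
  moreover have "\<exists>y. \<chi> y \<noteq> \<chi>\<^sub>0 y" if "\<chi> \<in> S" for \<chi>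
    using that insert.hyps(2) by (metis ext)
  ultimately have vanish_S: "\<forall>\<chi>\<in>S. a \<chi> = 0"
    by (metis eq_iff_diff_eq_0 mult_eq_0_iff)
  have "a \<chi>\<^sub>0 * \<chi>\<^sub>0 u = 0"
    using insert.prems(2)[of u] insert.hyps vanish_S by simp
  moreover have "\<chi>\<^sub>0 u = 1" using insert.prems(1) by (simp add: character_def)
  ultimately show ?case using vanish_S by simp
qed

corollary character_family_coeffs_vanish:
  assumes "finite J" and "\<forall>j\<in>J. character W c u (\<chi>s j)" and "\<And>p. (\<Sum>j\<in>J. f j * \<chi>s j p) = 0"
  shows "(\<Sum>j | j \<in> J \<and> \<chi>s j = \<chi>. f j) = 0"
proof -
  define a where "a \<chi>' = (\<Sum>j | j \<in> J \<and> \<chi>s j = \<chi>'. f j)" for \<chi>'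
  have "(\<Sum>\<chi>'\<in>\<chi>s ` J. a \<chi>' * \<chi>' p) = (\<Sum>j\<in>J. f j * \<chi>s j p)" for p
  proof -
    have "(\<Sum>j\<in>J. f j * \<chi>s j p) = (\<Sum>\<chi>'\<in>\<chi>s ` J. \<Sum>j | j \<in> J \<and> \<chi>s j = \<chi>'. f j * \<chi>s j p)"
      using assms(1) by (rule sum.image_gen)
    then show ?thesis unfolding a_def sum_distrib_right by (auto intro: sum.cong)
  qed
  then have "\<forall>\<chi>'\<in>\<chi>s ` J. a \<chi>' = 0"
    using assms by (intro characters_linearly_independent[of _ W c u]) auto
  moreover have "a \<chi> = 0" if "\<chi> \<notin> \<chi>s ` J"
    using that unfolding a_def by (metis (mono_tags, lifting) empty_Collect_eq image_eqI sum.empty)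
  ultimately show ?thesis unfolding a_def by blast
qed

definition tensor_terms :: "('x \<Rightarrow> 'x \<Rightarrow> 'x set) \<Rightarrow> ('y \<Rightarrow> 'y \<Rightarrow> 'y set)
    \<Rightarrow> 'x \<times> 'y \<Rightarrow> 'x \<times> 'y \<Rightarrow> ('x \<times> 'y) set" where
  "tensor_terms W W' x y = W (fst x) (fst y) \<times> W' (snd x) (snd y)"

definition tensor_coeff :: "('x \<Rightarrow> 'x \<Rightarrow> 'x \<Rightarrow> 'a::field) \<Rightarrow> ('y \<Rightarrow> 'y \<Rightarrow> 'y \<Rightarrow> 'a)
    \<Rightarrow> 'x \<times> 'y \<Rightarrow> 'x \<times> 'y \<Rightarrow> 'x \<times> 'y \<Rightarrow> 'a" where
  "tensor_coeff c c' x y w = c (fst x) (fst y) (fst w) * c' (snd x) (snd y) (snd w)"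

lemma character_tensor:
  fixes \<chi> :: "'x \<Rightarrow> 'a::field" and \<psi> :: "'y \<Rightarrow> 'a"
  assumes "character W c u \<chi>" and "character W' c' u' \<psi>"
  shows "character (tensor_terms W W') (tensor_coeff c c') (u, u') (\<lambda>(p, q). \<chi> p * \<psi> q)"
  unfolding character_def
proof (intro conjI allI)
  fix x y :: "'x \<times> 'y"
  obtain p q p' q' where xy: "x = (p, q)" "y = (p', q')" by fastforce
  have "(\<chi> p * \<psi> q) * (\<chi> p' * \<psi> q') = (\<chi> p * \<chi> p') * (\<psi> q * \<psi> q')"
    by (simp add: mult_ac)
  also have "\<dots> = (\<Sum>w\<in>W p p'. c p p' w * \<chi> w) * (\<Sum>w'\<in>W' q q'. c' q q' w' * \<psi> w')"
    using assms by (simp add: character_def)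
  also have "\<dots> = (\<Sum>(w, w')\<in>W p p' \<times> W' q q'. (c p p' w * \<chi> w) * (c' q q' w' * \<psi> w'))"
    by (simp add: sum_product sum.cartesian_product)
  also have "\<dots> = (\<Sum>z\<in>tensor_terms W W' x y. tensor_coeff c c' x y z * (case z of (w, w') \<Rightarrow> \<chi> w * \<psi> w'))"
    unfolding tensor_terms_def tensor_coeff_def xy by (intro sum.cong) (auto simp: mult_ac)
  finally show "(case x of (p, q) \<Rightarrow> \<chi> p * \<psi> q) * (case y of (p, q) \<Rightarrow> \<chi> p * \<psi> q)
      = (\<Sum>z\<in>tensor_terms W W' x y. tensor_coeff c c' x y z * (case z of (p, q) \<Rightarrow> \<chi> p * \<psi> q))"
    using xy by simp
qed (use assms in \<open>simp add: character_def\<close>)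

lemma tensor_character_eq_iff:
  assumes "character W c u \<chi>" "character W c u \<chi>'" "character W' c' u' \<psi>" "character W' c' u' \<psi>'"
  shows "(\<lambda>(p, q). \<chi> p * \<psi> q) = (\<lambda>(p, q). \<chi>' p * \<psi>' q) \<longleftrightarrow> \<chi> = \<chi>' \<and> \<psi> = \<psi>'"
proof
  assume eq: "(\<lambda>(p, q). \<chi> p * \<psi> q) = (\<lambda>(p, q). \<chi>' p * \<psi>' q)"
  have "\<chi> p = \<chi>' p" "\<psi> q = \<psi>' q" for p q
    using fun_cong[OF eq, of "(p, u')"] fun_cong[OF eq, of "(u, q)"] assms
    by (simp_all add: character_def)
  then show "\<chi> = \<chi>' \<and> \<psi> = \<psi>'" by auto
qed auto

lemma tensor_characters_independent:
  fixes \<epsilon> :: "'x \<Rightarrow> 'a::field" and S :: "(('x \<Rightarrow> 'a) \<times> ('x \<Rightarrow> 'a)) set"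
  assumes counit: "character W c u \<epsilon>" and "finite S"
    and chars: "\<forall>(g, g')\<in>S. character W c u g \<and> character W c u g' \<and> g \<noteq> \<epsilon> \<and> g' \<noteq> \<epsilon>"
    and rel: "\<And>p q. (\<Sum>(g, g')\<in>S. d (g, g') * ((g p - \<epsilon> p) * (g' q - \<epsilon> q))) = 0"
  shows "\<forall>x\<in>S. d x = 0"
proof
  fix x assume "x \<in> S"
  define pick where "pick b g = (if b then g else \<epsilon>)" for b and g :: "'x \<Rightarrow> 'a"
  define sgn :: "bool \<Rightarrow> 'a" where "sgn b = (if b then 1 else -1)" for b
  define \<chi>s where "\<chi>s = (\<lambda>((g, g'), (b, b')). \<lambda>(p, q). pick b g p * pick b' g' q)"
  define J where "J = S \<times> (UNIV :: (bool \<times> bool) set)"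
  have UNIV_bool2:
    "(UNIV :: (bool \<times> bool) set) = {(True, True), (True, False), (False, True), (False, False)}"
    by auto
  \<comment> \<open>\<open>(g - \<epsilon>) \<otimes> (g' - \<epsilon>)\<close> is the signed sum of the four product characters \<open>\<chi>s ((g, g'), _)\<close>\<close>
  have "(\<Sum>j\<in>J. d (fst j) * sgn (fst (snd j)) * sgn (snd (snd j)) * \<chi>s j z) = 0" for z
  proof -
    obtain p q where z: "z = (p, q)" by fastforce
    have "(\<Sum>j\<in>J. d (fst j) * sgn (fst (snd j)) * sgn (snd (snd j)) * \<chi>s j z)
        = (\<Sum>(g, g')\<in>S. d (g, g') * ((g p - \<epsilon> p) * (g' q - \<epsilon> q)))"
      unfolding J_def sum.cartesian_product' UNIV_bool2
      by (intro sum.cong) (auto simp: z \<chi>s_def pick_def sgn_def algebra_simps)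
    then show ?thesis using rel by simp
  qed
  moreover have "character (tensor_terms W W) (tensor_coeff c c) (u, u) (\<chi>s j)" if "j \<in> J" for j
    using that chars counit unfolding J_def \<chi>s_def pick_def
    by (auto intro!: character_tensor)
  ultimately have "(\<Sum>j | j \<in> J \<and> \<chi>s j = \<chi>s (x, True, True).
      d (fst j) * sgn (fst (snd j)) * sgn (snd (snd j))) = 0"
    using \<open>finite S\<close> unfolding J_def by (intro character_family_coeffs_vanish) auto
  moreover have "{j. j \<in> J \<and> \<chi>s j = \<chi>s (x, True, True)} = {(x, True, True)}"
  proof (intro set_eqI iffI)
    fix j assume "j \<in> {j. j \<in> J \<and> \<chi>s j = \<chi>s (x, True, True)}"
    then obtain h h' b b' where j: "j = ((h, h'), (b, b'))" "(h, h') \<in> S"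
      and eq: "\<chi>s j = \<chi>s (x, True, True)"
      unfolding J_def by auto
    obtain g g' where x: "x = (g, g')" by fastforce
    have "character W c u (pick b'' f)" if "character W c u f" for b'' f
      using that counit by (simp add: pick_def)
    then have "\<chi>s j = \<chi>s (x, True, True) \<longleftrightarrow> pick b h = pick True g \<and> pick b' h' = pick True g'"
      using chars j(2) \<open>x \<in> S\<close> unfolding j(1) x \<chi>s_def prod.case
      by (intro tensor_character_eq_iff[where W = W and c = c and u = u and W' = W and c' = c
            and u' = u]) auto
    with eq have "pick b h = g" "pick b' h' = g'" by (auto simp: pick_def)
    then show "j \<in> {(x, True, True)}"
      using chars \<open>x \<in> S\<close> unfolding j(1) x pick_def by (auto split: if_splits)
  qed (use \<open>x \<in> S\<close> J_def in auto)
  ultimately show "d x = 0" by (simp add: sgn_def)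
qed

text \<open>Structure constants of the algebra dual to the coalgebra of non-associative monomials,
  \<open>p \<cdot> q = \<Sum>\<^sub>w \<langle>\<Delta> w, p \<otimes> q\<rangle> w\<close>; group-like series are
  characters of it.\<close>

definition ndual_terms :: "nmon option \<Rightarrow> nmon option \<Rightarrow> nmon option set" where
  "ndual_terms p q = {w. (p, q) \<in> set (ocop w)}"

definition ndual_coeff :: "nmon option \<Rightarrow> nmon option \<Rightarrow> nmon option \<Rightarrow> rat" where
  "ndual_coeff p q w = of_nat (count_list (ocop w) (p, q))"

lemma ngrouplike_character:
  assumes "ngrouplike n g"
  shows "character ndual_terms ndual_coeff None g"
proof -
  have "g p * g q = (\<Sum>w\<in>ndual_terms p q. ndual_coeff p q w * g w)" for p q
  proof -
    have "ncoprod g (p, q) = g p * g q"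
      using assms unfolding ngrouplike_def by simp
    then show ?thesis unfolding ncoprod_def ndual_terms_def ndual_coeff_def by (simp add: mult.commute)
  qed
  then show ?thesis
    using assms unfolding character_def ngrouplike_def by simp
qed

lemma omul_eq_None_iff: "omul u v = None \<longleftrightarrow> u = None \<and> v = None"
  by (cases u; cases v) auto

lemma None_None_notin_cop: "(None, None) \<notin> set (cop m)"
  by (induction m) (auto simp: omul_eq_None_iff eq_commute[of None])

lemma nsone_character: "character ndual_terms ndual_coeff None nsone"
proof -
  have "nsone p * nsone q = (\<Sum>w\<in>ndual_terms p q. ndual_coeff p q w * nsone w)" for p q
  proof (cases "p = None \<and> q = None")
    case True
    then have "ndual_terms p q = {None}"
      using None_None_notin_cop by (auto simp: ndual_terms_def ocop_def split: option.splits)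
    then show ?thesis using True by (simp add: ndual_coeff_def nsone_def ocop_def)
  next
    case False
    then show ?thesis by (auto simp: ndual_terms_def nsone_def ocop_def intro!: sum.neutral)
  qed
  then show ?thesis unfolding character_def by (simp add: nsone_def)
qed

lemma sum_list_zip_map_of:
  assumes "length xs = length ys" and "distinct xs"
  shows "(\<Sum>(x, y)\<leftarrow>zip xs ys. f x y) = (\<Sum>x\<in>set xs. f x (the (map_of (zip xs ys) x)))"
  using assms
proof (induction xs ys rule: list_induct2)
  case (Cons x xs y ys)
  have "(\<Sum>x'\<in>set xs. f x' (the (map_of (zip (x # xs) (y # ys)) x')))
      = (\<Sum>x'\<in>set xs. f x' (the (map_of (zip xs ys) x')))"
    using Cons.prems by (intro sum.cong) auto
  then show ?case using Cons by simp
qed simp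

lemma set_eq_image_map_of_zip:
  assumes "length xs = length ys" and "distinct xs"
  shows "set ys = (\<lambda>x. the (map_of (zip xs ys) x)) ` set xs"
proof -
  have "set ys = ran (map_of (zip xs ys))"
    using ran_map_of_zip[OF assms] by simp
  also have "\<dots> = (\<lambda>x. the (map_of (zip xs ys) x)) ` set xs"
  proof (intro set_eqI iffI)
    fix b assume "b \<in> ran (map_of (zip xs ys))"
    then obtain a where a: "map_of (zip xs ys) a = Some b" unfolding ran_def by blast
    then have "a \<in> set xs" by (blast dest: map_of_SomeD set_zip_leftD)
    with a show "b \<in> (\<lambda>x. the (map_of (zip xs ys) x)) ` set xs" by (metis image_eqI option.sel)
  next
    fix b assume "b \<in> (\<lambda>x. the (map_of (zip xs ys) x)) ` set xs"
    then obtain a where "a \<in> set xs" "b = the (map_of (zip xs ys) a)" by blast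
    then have "map_of (zip xs ys) a = Some b" using assms(1) by fastforce
    then show "b \<in> ran (map_of (zip xs ys))" by (rule ranI)
  qed
  finally show ?thesis .
qed

lemma tlist_prod_generators_single:
  fixes ps :: "(nser \<times> nser) list" and d :: "int list"
  assumes "length d = length ps" and "distinct ps"
  shows "tlist_prod (map (\<lambda>i. tipow (texp (tgen (TI i))) (e i)) [0..<n]
           @ map (\<lambda>((g, g'), k). tipow (tstar g g') k) (zip ps d)) {#s#}
    = (\<Sum>i<n. of_int (e i) * tgen (TI i) {#s#})
      + (\<Sum>x\<in>set ps. of_int (the (map_of (zip ps d) x)) * tt (fst x) (snd x) {#s#})"
proof -
  have "tlist_prod (map (\<lambda>i. tipow (texp (tgen (TI i))) (e i)) [0..<n]
           @ map (\<lambda>((g, g'), k). tipow (tstar g g') k) (zip ps d)) {#s#}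
    = (\<Sum>i<n. of_int (e i) * tgen (TI i) {#s#})
      + (\<Sum>(x, k)\<leftarrow>zip ps d. of_int k * tt (fst x) (snd x) {#s#})"
    by (subst tlist_prod_single)
      (auto simp: tipow_empty_single texp_empty texp_single tstar_def o_def case_prod_beta
        sum_set_upt_conv_sum_list_nat[symmetric] atLeast0LessThan split_def)
  then show ?thesis
    using sum_list_zip_map_of[OF assms(1)[symmetric] assms(2),
        where f = "\<lambda>x k. of_int k * tt (fst x) (snd x) {#s#}"]
    by simp
qed

theorem lemma5p2:
  fixes n :: nat and e :: "nat \<Rightarrow> int" and ps :: "(nser \<times> nser) list" and d :: "int list"
  assumes "length d = length ps"
    and "distinct ps"
    and "\<forall>(g, g') \<in> set ps. ngrouplike n g \<and> ngrouplike n g' \<and> g \<noteq> nsone \<and> g' \<noteq> nsone"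
    and "tlist_prod (map (\<lambda>i. tipow (texp (tgen (TI i))) (e i)) [0..<n]
           @ map (\<lambda>((g, g'), k). tipow (tstar g g') k) (zip ps d)) = tone"
  shows "(\<forall>i<n. e i = 0) \<and> (\<forall>k \<in> set d. k = 0)"
proof -
  define D where "D x = the (map_of (zip ps d) x)" for x
  have lin: "(\<Sum>i<n. of_int (e i) * tgen (TI i) {#s#})
      + (\<Sum>x\<in>set ps. of_int (D x) * tt (fst x) (snd x) {#s#}) = 0" for s
    using tlist_prod_generators_single[OF assms(1,2), of e n s] assms(4)
    by (simp add: D_def tone_single)
  have "e i = 0" if "i < n" for i
  proof -
    have "(\<Sum>i'<n. of_int (e i') * tgen (TI i') {#TI i#}) = (\<Sum>i'<n. if i' = i then of_int (e i') else 0)"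
      by (intro sum.cong) (auto simp: tgen_single)
    then show ?thesis using lin[of "TI i"] that by (simp add: tt_TI)
  qed
  moreover have "\<forall>x\<in>set ps. (of_int (D x) :: rat) = 0"
  proof (rule tensor_characters_independent[OF nsone_character])
    show "\<forall>(g, g')\<in>set ps. character ndual_terms ndual_coeff None g
        \<and> character ndual_terms ndual_coeff None g' \<and> g \<noteq> nsone \<and> g' \<noteq> nsone"
      using assms(3) ngrouplike_character by fast
    show "(\<Sum>(g, g')\<in>set ps. of_int (D (g, g')) * ((g p - nsone p) * (g' q - nsone q))) = 0" for p q
    proof (cases p; cases q)
      fix a b assume "p = Some a" "q = Some b"
      then show ?thesis using lin[of "TP a b"] by (simp add: tgen_single tt_TP nsone_def case_prod_beta)
    qed (use assms(3) in \<open>auto simp: nsone_def ngrouplike_def intro!: sum.neutral\<close>)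
  qed simp
  moreover have "set d = D ` set ps"
    unfolding D_def by (rule set_eq_image_map_of_zip[OF assms(1)[symmetric] assms(2)])
  ultimately show ?thesis by fastforce
qed

end
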